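(* Let $\mathcal{FT}$ be the free nonsymmetric operad generated by five ternary operations $\omega_1,\dots,\omega_5$, written $\omega_i=(x,y,z)_i$, and let $d\colon\mathcal{FT}\to\mathcal{D}$ be the operad morphism into the dendriform operad defined on generators by \[ (x,y,z)_1\mapsto x\succ(y\prec z),\quad (x,y,z)_2\mapsto x\prec(y\prec z),\quad (x,y,z)_3\mapsto x\prec(y\succ z), \] \[ (x,y,z)_4\mapsto (x\succ y)\succ z,\quad (x,y,z)_5\mapsto (x\prec y)\succ z . \] (Its image is the Veronese square $\mathcal{D}^{[2]}$, the suboperad of $\mathcal{D}$ generated by $\mathcal{D}(3)$.) Then the kernel of the restriction $d\colon\mathcal{FT}(5)\to\mathcal{D}(5)$ (the space of quadratic relations satisfied by the five generating operations of $\mathcal{D}^{[2]}$) has dimension $33$, and the following 33 elements of $\mathcal{FT}(5)$ form a basis of it; i.e. every quadratic relation satisfied by the five generators is a linear combination of: \begin{align*} &((v,w,x)_4,y,z)_2 - (v,w,(x,y,z)_2)_4,\\ &((v,w,x)_5,y,z)_2 - (v,w,(x,y,z)_2)_5,\\ &((v,w,x)_4,y,z)_3 - (v,w,(x,y,z)_3)_4,\\ &((v,w,x)_5,y,z)_3 - (v,w,(x,y,z)_3)_5,\\ &((v,w,x)_1,y,z)_1 + ((v,w,x)_2,y,z)_1 - (v,(w,x,y)_5,z)_1,\\ &(v,(w,x,y)_1,z)_3 + (v,(w,x,y)_2,z)_3 - (v,w,(x,y,z)_5)_3,\\ &((v,w,x)_1,y,z)_4 + ((v,w,x)_2,y,z)_4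 - (v,(w,x,y)_5,z)_4,\\ &((v,w,x)_1,y,z)_1 + ((v,w,x)_4,y,z)_1 - (v,w,(x,y,z)_1)_4,\\ &(v,(w,x,y)_4,z)_2 + (v,(w,x,y)_5,z)_2 - (v,w,(x,y,z)_1)_3,\\ &((v,w,x)_4,y,z)_5 + ((v,w,x)_5,y,z)_5 - (v,(w,x,y)_1,z)_4,\\ &((v,w,x)_4,y,z)_5 + (v,(w,x,y)_2,z)_4 - (v,w,(x,y,z)_5)_4,\\ &(v,(w,x,y)_3,z)_1 - (v,w,(x,y,z)_1)_1 - (v,w,(x,y,z)_4)_1,\\ &(v,(w,x,y)_3,z)_2 - (v,w,(x,y,z)_1)_2 - (v,w,(x,y,z)_4)_2,\\ &((v,w,x)_3,y,z)_5 - (v,(w,x,y)_1,z)_5 - (v,(w,x,y)_4,z)_5,\\ &((v,w,x)_1,y,z)_2 - (v,w,(x,y,z)_1)_1 - (v,w,(x,y,z)_2)_1,\\ &((v,w,x)_3,y,z)_2 - (v,(w,x,y)_4,z)_2 - (v,w,(x,y,z)_2)_3,\\ &(v,(w,x,y)_1,z)_2 - (v,w,(x,y,z)_2)_3 - (v,w,(x,y,z)_3)_3,\\ &((v,w,x)_1,y,z)_5 - (v,(w,x,y)_2,z)_4 - (v,(w,x,y)_3,z)_4,\\ &(v,(w,x,y)_2,z)_1 - (v,w,(x,y,z)_2)_1 - (v,w,(x,y,z)_3)_1 - (v,w,(x,y,z)_5)_1,\\ &((v,w,x)_2,y,z)_2 - (v,(w,x,y)_5,z)_2 - (v,w,(x,y,z)_1)_2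 - (v,w,(x,y,z)_2)_2,\\ &(v,(w,x,y)_2,z)_2 - (v,w,(x,y,z)_2)_2 - (v,w,(x,y,z)_3)_2 - (v,w,(x,y,z)_5)_2,\\ &((v,w,x)_3,y,z)_3 - (v,(w,x,y)_1,z)_3 - (v,(w,x,y)_4,z)_3 - (v,w,(x,y,z)_3)_3,\\ &(v,(w,x,y)_3,z)_3 + (v,(w,x,y)_4,z)_3 + (v,(w,x,y)_5,z)_3 - (v,w,(x,y,z)_4)_3,\\ &((v,w,x)_3,y,z)_4 + ((v,w,x)_4,y,z)_4 + ((v,w,x)_5,y,z)_4 - (v,(w,x,y)_4,z)_4,\\ &((v,w,x)_1,y,z)_4 + ((v,w,x)_4,y,z)_4 + (v,(w,x,y)_3,z)_4 - (v,w,(x,y,z)_4)_4,\\ &((v,w,x)_2,y,z)_5 - (v,(w,x,y)_2,z)_5 - (v,(w,x,y)_3,z)_5 - (v,(w,x,y)_5,z)_5,\\ &((v,w,x)_5,y,z)_5 + (v,(w,x,y)_1,z)_5 + (v,(w,x,y)_2,z)_5 - (v,w,(x,y,z)_5)_5,\\ &((v,w,x)_2,y,z)_1 + ((v,w,x)_3,y,z)_1 + ((v,w,x)_5,y,z)_1 - (v,w,(x,y,z)_1)_5,\\ &(v,(w,x,y)_4,z)_1 + (v,(w,x,y)_5,z)_1 - (v,w,(x,y,z)_1)_4 - (v,w,(x,y,z)_1)_5,\\ &((v,w,x)_1,y,z)_3 - (v,(w,x,y)_2,z)_1 + (v,w,(x,y,z)_2)_1 - (v,w,(x,y,z)_4)_1,\\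 &(v,(w,x,y)_1,z)_1 - (v,w,(x,y,z)_2)_4 - (v,w,(x,y,z)_2)_5 - (v,w,(x,y,z)_3)_4 - (v,w,(x,y,z)_3)_5,\\ &((v,w,x)_2,y,z)_3 - (v,(w,x,y)_2,z)_2 - (v,(w,x,y)_2,z)_3 + (v,(w,x,y)_4,z)_3\\ &\qquad + (v,w,(x,y,z)_2)_2 - (v,w,(x,y,z)_4)_2 - (v,w,(x,y,z)_4)_3,\\ &((v,w,x)_2,y,z)_4 + ((v,w,x)_2,y,z)_5 - ((v,w,x)_4,y,z)_4 - (v,(w,x,y)_2,z)_5\\ &\qquad + (v,(w,x,y)_4,z)_4 + (v,(w,x,y)_4,z)_5 - (v,w,(x,y,z)_4)_5. \end{align*}
   Context: All operads are nonsymmetric, arity-graded, over a field of characteristic $0$ (e.g. $\mathbb{Q}$). The dendriform operad $\mathcal{D}$ is the nonsymmetric operad generated by two binary operations $\prec,\succ$ subject to \[ (x\succ y)\prec z = x\succ(y\prec z),\quad (x\prec y)\prec z = x\prec(y\prec z)+x\prec(y\succ z),\quad x\succ(y\succ z)=(x\succ y)\succ z+(x\prec y)\succ z . \] In $\mathcal{FT}$, the arity-5 component $\mathcal{FT}(5)$ has dimension 75 with basis the monomials $\omega_j\circ_k\omega_i$ ($1\le i,j\le5$, $k=1,2,3$), written with the variables $v,w,x,y,z$ in fixed left-to-right order as \[ ((v,w,x)_i,y,z)_j=\omega_j\circ_1\omega_i,\qquad (v,(w,x,y)_i,z)_j=\omega_j\circ_2\omega_i,\qquad (v,w,(x,y,z)_i)_j=\omega_j\circ_3\omega_i,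 \] where $\circ_k$ denotes partial composition into the $k$-th input. A relation is an element of $\mathcal{FT}(5)$ mapped to $0$ by $d$ (meaning the corresponding identity holds in every dendriform algebra, e.g. $((v,w,x)_4,y,z)_2\mapsto ((v\succ w)\succ x)\prec(y\prec z)$). *)

theory Defs
  imports Main "HOL-Library.Poly_Mapping"
begin

datatype gen = W1 | W2 | W3 | W4 | W5

text \<open>Planar ternary trees; leaves stand for the inputs in left-to-right order
  (nonsymmetric operad, so the variables are implicit).  A tree with n leaves is
  a monomial of FT(n).\<close>
datatype ttree = TLeaf | TNode gen ttree ttree ttree

fun tarity :: "ttree \<Rightarrow> nat" where
  "tarity TLeaf = 1"
| "tarity (TNode g a b c) = tarity a + tarity b + tarity c"

type_synonym 'k ft = "ttree \<Rightarrow>\<^sub>0 'k"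

definition FT5 :: "('k::field_char_0) ft set" where
  "FT5 = {c. \<forall>t \<in> Poly_Mapping.keys c. tarity t = 5}"

datatype dop = Prec | Succ

datatype btree = BLeaf | BNode dop btree btree

type_synonym 'k bt = "btree \<Rightarrow>\<^sub>0 'k"

definition smul :: "'k::field_char_0 \<Rightarrow> ('a \<Rightarrow>\<^sub>0 'k) \<Rightarrow> ('a \<Rightarrow>\<^sub>0 'k)" where
  "smul r p = Poly_Mapping.map (\<lambda>x. r * x) p"

definition mon :: "'a \<Rightarrow> ('a \<Rightarrow>\<^sub>0 'k::field_char_0)" where
  "mon t = Poly_Mapping.single t 1"

abbreviation prec :: "btree \<Rightarrow> btree \<Rightarrow> btree" where "prec a b \<equiv> BNode Prec a b"
abbreviation succ :: "btree \<Rightarrow> btree \<Rightarrow> btree" where "succ a b \<equiv> BNode Succ a b"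

definition graft_left :: "dop \<Rightarrow> ('k::field_char_0) bt \<Rightarrow> btree \<Rightarrow> 'k bt" where
  "graft_left opr p t = (\<Sum>s\<in>Poly_Mapping.keys p. Poly_Mapping.single (BNode opr s t) (Poly_Mapping.lookup p s))"

definition graft_right :: "dop \<Rightarrow> btree \<Rightarrow> ('k::field_char_0) bt \<Rightarrow> 'k bt" where
  "graft_right opr t p = (\<Sum>s\<in>Poly_Mapping.keys p. Poly_Mapping.single (BNode opr t s) (Poly_Mapping.lookup p s))"

definition dend_rel1 :: "btree \<Rightarrow> btree \<Rightarrow> btree \<Rightarrow> ('k::field_char_0) bt" where
  "dend_rel1 a b c = mon (prec (succ a b) c) - mon (succ a (prec b c))"

definition dend_rel2 :: "btree \<Rightarrow> btree \<Rightarrow> btree \<Rightarrow> ('k::field_char_0) bt" where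
  "dend_rel2 a b c = mon (prec (prec a b) c) - mon (prec a (prec b c)) - mon (prec a (succ b c))"

definition dend_rel3 :: "btree \<Rightarrow> btree \<Rightarrow> btree \<Rightarrow> ('k::field_char_0) bt" where
  "dend_rel3 a b c = mon (succ a (succ b c)) - mon (succ (succ a b) c) - mon (succ (prec a b) c)"

text \<open>The operadic ideal generated by the dendriform relations; the dendriform
  operad D is the quotient of the free operad by this ideal.\<close>
inductive_set dend_ideal :: "('k::field_char_0) bt set" where
  rel1: "dend_rel1 a b c \<in> dend_ideal"
| rel2: "dend_rel2 a b c \<in> dend_ideal"
| rel3: "dend_rel3 a b c \<in> dend_ideal"
| zero: "0 \<in> dend_ideal"
| add: "p \<in> dend_ideal \<Longrightarrow> q \<in> dend_ideal \<Longrightarrow> p + q \<in> dend_ideal"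
| scale: "p \<in> dend_ideal \<Longrightarrow> smul r p \<in> dend_ideal"
| left: "p \<in> dend_ideal \<Longrightarrow> graft_left opr p t \<in> dend_ideal"
| right: "p \<in> dend_ideal \<Longrightarrow> graft_right opr t p \<in> dend_ideal"

fun dgen :: "gen \<Rightarrow> btree \<Rightarrow> btree \<Rightarrow> btree \<Rightarrow> btree" where
  "dgen W1 x y z = succ x (prec y z)"
| "dgen W2 x y z = prec x (prec y z)"
| "dgen W3 x y z = prec x (succ y z)"
| "dgen W4 x y z = succ (succ x y) z"
| "dgen W5 x y z = succ (prec x y) z"

fun dtree :: "ttree \<Rightarrow> btree" where
  "dtree TLeaf = BLeaf"
| "dtree (TNode g a b c) = dgen g (dtree a) (dtree b) (dtree c)"

text \<open>Linear extension of d, landing in the free operad on prec, succ (i.e. a lift to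
  the free operad; an element of FT maps to 0 in D iff its lift lies in dend_ideal).\<close>
definition dlin :: "('k::field_char_0) ft \<Rightarrow> 'k bt" where
  "dlin c = (\<Sum>t\<in>Poly_Mapping.keys c. Poly_Mapping.single (dtree t) (Poly_Mapping.lookup c t))"

definition ker_d5 :: "('k::field_char_0) ft set" where
  "ker_d5 = {c \<in> FT5. dlin c \<in> dend_ideal}"

text \<open>A i j = ((v,w,x)_i,y,z)_j,  B i j = (v,(w,x,y)_i,z)_j,  C i j = (v,w,(x,y,z)_i)_j.\<close>
definition A :: "gen \<Rightarrow> gen \<Rightarrow> ('k::field_char_0) ft" where
  "A i j = mon (TNode j (TNode i TLeaf TLeaf TLeaf) TLeaf TLeaf)"
definition B :: "gen \<Rightarrow> gen \<Rightarrow> ('k::field_char_0) ft" where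
  "B i j = mon (TNode j TLeaf (TNode i TLeaf TLeaf TLeaf) TLeaf)"
definition C :: "gen \<Rightarrow> gen \<Rightarrow> ('k::field_char_0) ft" where
  "C i j = mon (TNode j TLeaf TLeaf (TNode i TLeaf TLeaf TLeaf))"

definition rels33 :: "('k::field_char_0) ft list" where
  "rels33 = [
    A W4 W2 - C W2 W4,
    A W5 W2 - C W2 W5,
    A W4 W3 - C W3 W4,
    A W5 W3 - C W3 W5,
    A W1 W1 + A W2 W1 - B W5 W1,
    B W1 W3 + B W2 W3 - C W5 W3,
    A W1 W4 + A W2 W4 - B W5 W4,
    A W1 W1 + A W4 W1 - C W1 W4,
    B W4 W2 + B W5 W2 - C W1 W3,
    A W4 W5 + A W5 W5 - B W1 W4,
    A W4 W5 + B W2 W4 - C W5 W4,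
    B W3 W1 - C W1 W1 - C W4 W1,
    B W3 W2 - C W1 W2 - C W4 W2,
    A W3 W5 - B W1 W5 - B W4 W5,
    A W1 W2 - C W1 W1 - C W2 W1,
    A W3 W2 - B W4 W2 - C W2 W3,
    B W1 W2 - C W2 W3 - C W3 W3,
    A W1 W5 - B W2 W4 - B W3 W4,
    B W2 W1 - C W2 W1 - C W3 W1 - C W5 W1,
    A W2 W2 - B W5 W2 - C W1 W2 - C W2 W2,
    B W2 W2 - C W2 W2 - C W3 W2 - C W5 W2,
    A W3 W3 - B W1 W3 - B W4 W3 - C W3 W3,
    B W3 W3 + B W4 W3 + B W5 W3 - C W4 W3,
    A W3 W4 + A W4 W4 + A W5 W4 - B W4 W4,
    A W1 W4 + A W4 W4 + B W3 W4 - C W4 W4,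
    A W2 W5 - B W2 W5 - B W3 W5 - B W5 W5,
    A W5 W5 + B W1 W5 + B W2 W5 - C W5 W5,
    A W2 W1 + A W3 W1 + A W5 W1 - C W1 W5,
    B W4 W1 + B W5 W1 - C W1 W4 - C W1 W5,
    A W1 W3 - B W2 W1 + C W2 W1 - C W4 W1,
    B W1 W1 - C W2 W4 - C W2 W5 - C W3 W4 - C W3 W5,
    A W2 W3 - B W2 W2 - B W2 W3 + B W4 W3 + C W2 W2 - C W4 W2 - C W4 W3,
    A W2 W4 + A W2 W5 - A W4 W4 - B W2 W5 + B W4 W4 + B W4 W5 - C W4 W5
  ]"

end

theory Submission
  imports Defs "HOL-Library.Multiset"
begin

(* The 33 elements lie in the kernel because the image of each under d, written in the free operad
   on prec and succ, rewrites to zero when the dendriform relations are oriented towards their first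
   term; every rewriting step subtracts an element of the ideal.  They are linearly independent
   because they are in echelon form with respect to 33 pivot monomials.

   For spanning, realise D in the algebra of permutations (Loday-Ronco): the coefficient of a
   permutation w of 0..4 in the image is a linear form on FT(5) that vanishes on the kernel.
   Subtract from a kernel element the combination of the relations that clears the pivot
   coordinates; 42 such forms are triangular on the remaining 42 monomials, so the difference
   is 0. *)


section \<open>Shuffles of words\<close>

fun mshuffles :: "nat list \<Rightarrow> nat list \<Rightarrow> nat list multiset" where
  "mshuffles [] v = {#v#}"
| "mshuffles (a # u) [] = {#a # u#}"
| "mshuffles (a # u) (b # v) =
     image_mset (Cons a) (mshuffles u (b # v)) + image_mset (Cons b) (mshuffles (a # u) v)"

lemma mshuffles_Nil_right [simp]: "mshuffles u [] = {#u#}"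
  by (cases u) auto

lemma mem_mshuffles:
  "x \<in># mshuffles u v \<Longrightarrow> length x = length u + length v \<and> set x = set u \<union> set v"
  by (induction u v arbitrary: x rule: mshuffles.induct) auto

definition mshuffles_left :: "nat list multiset \<Rightarrow> nat list \<Rightarrow> nat list multiset" where
  "mshuffles_left X w = (\<Sum>x\<in>#X. mshuffles x w)"

definition mshuffles_right :: "nat list \<Rightarrow> nat list multiset \<Rightarrow> nat list multiset" where
  "mshuffles_right u Y = (\<Sum>y\<in>#Y. mshuffles u y)"

lemma mshuffles_left_add [simp]: "mshuffles_left (X + Y) w = mshuffles_left X w + mshuffles_left Y w"
  by (simp add: mshuffles_left_def)

lemma mshuffles_right_add [simp]: "mshuffles_right u (X + Y) = mshuffles_right u X + mshuffles_right u Y"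
  by (simp add: mshuffles_right_def)

lemma mshuffles_left_single [simp]: "mshuffles_left {#x#} w = mshuffles x w"
  by (simp add: mshuffles_left_def)

lemma mshuffles_right_single [simp]: "mshuffles_right u {#y#} = mshuffles u y"
  by (simp add: mshuffles_right_def)

lemma mshuffles_left_Nil [simp]: "mshuffles_left X [] = X"
  by (induction X) (auto simp: mshuffles_left_def)

lemma mshuffles_right_Nil [simp]: "mshuffles_right [] Y = Y"
  by (induction Y) (auto simp: mshuffles_right_def)

lemma sum_mset_cong:
  "(\<And>x. x \<in># X \<Longrightarrow> f x = g x) \<Longrightarrow> (\<Sum>x\<in>#X. f x) = (\<Sum>x\<in>#X. g x)"
  by (metis image_mset_cong)

lemma image_mset_sum_mset: "image_mset f (\<Sum>x\<in>#X. g x) = (\<Sum>x\<in>#X. image_mset f (g x))"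
  by (induction X) auto

lemma mshuffles_left_image_Cons:
  "mshuffles_left (image_mset (Cons a) X) (c # w) =
     image_mset (Cons a) (mshuffles_left X (c # w)) + image_mset (Cons c) (mshuffles_left (image_mset (Cons a) X) w)"
  by (induction X) (auto simp: mshuffles_left_def ac_simps)

lemma mshuffles_right_image_Cons:
  "mshuffles_right (a # u) (image_mset (Cons b) Y) =
     image_mset (Cons a) (mshuffles_right u (image_mset (Cons b) Y)) + image_mset (Cons b) (mshuffles_right (a # u) Y)"
  by (induction Y) (auto simp: mshuffles_right_def ac_simps)

lemma mshuffles_assoc: "mshuffles_left (mshuffles u v) w = mshuffles_right u (mshuffles v w)"
proof (induction "length u + length v + length w" arbitrary: u v w rule: less_induct)
  case less
  show ?case
  proof (cases "u = [] \<or> v = [] \<or> w = []")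
    case True
    then show ?thesis by auto
  next
    case False
    then obtain a u' b v' c w' where u: "u = a # u'" and v: "v = b # v'" and w: "w = c # w'"
      by (meson list.exhaust)
    have IH: "mshuffles_left (mshuffles u' v) w = mshuffles_right u' (mshuffles v w)"
      "mshuffles_left (mshuffles u v') w = mshuffles_right u (mshuffles v' w)"
      "mshuffles_left (mshuffles u v) w' = mshuffles_right u (mshuffles v w')"
      using less.hyps[of u' v w] less.hyps[of u v' w] less.hyps[of u v w'] u v w by simp_all
    have "mshuffles_left (mshuffles u v) w =
        image_mset (Cons a) (mshuffles_left (mshuffles u' v) w)
      + image_mset (Cons b) (mshuffles_left (mshuffles u v') w)
      + image_mset (Cons c) (mshuffles_left (mshuffles u v) w')"
      using u v w by (simp add: mshuffles_left_image_Cons ac_simps)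
    moreover have "mshuffles_right u (mshuffles v w) =
        image_mset (Cons a) (mshuffles_right u' (mshuffles v w))
      + image_mset (Cons b) (mshuffles_right u (mshuffles v' w))
      + image_mset (Cons c) (mshuffles_right u (mshuffles v w'))"
      using u v w by (simp add: mshuffles_right_image_Cons ac_simps)
    ultimately show ?thesis
      by (simp only: IH)
  qed
qed


section \<open>Permutations as a dendriform algebra\<close>

definition shift_word :: "nat \<Rightarrow> nat list \<Rightarrow> nat list" where
  "shift_word k v = map (\<lambda>x. x + k) v"

lemma shift_word_Nil [simp]: "shift_word k [] = []"
  and shift_word_Cons [simp]: "shift_word k (b # v) = (b + k) # shift_word k v"
  and shift_word_shift_word [simp]: "shift_word k (shift_word m v) = shift_word (k + m) v"
  and length_shift_word [simp]: "length (shift_word k v) = length v"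
  and shift_word_eq_Nil_iff [simp]: "shift_word k v = [] \<longleftrightarrow> v = []"
  by (simp_all add: shift_word_def ac_simps)

lemma image_mset_shift_word_image_mset_Cons:
  "image_mset (shift_word k) (image_mset (Cons a) X) = image_mset (Cons (a + k)) (image_mset (shift_word k) X)"
  by (simp add: multiset.map_comp comp_def)

lemma image_mset_shift_word_mshuffles:
  "image_mset (shift_word k) (mshuffles u v) = mshuffles (shift_word k u) (shift_word k v)"
  by (induction u v rule: mshuffles.induct) (auto simp: image_mset_shift_word_image_mset_Cons)

lemma sum_mset_mshuffles_shift_word:
  "(\<Sum>y\<in>#Y. mshuffles u (shift_word k y)) = mshuffles_right u (image_mset (shift_word k) Y)"
  by (simp add: mshuffles_right_def multiset.map_comp comp_def)

text \<open>The dendriform structure on permutations (Loday--Ronco): a permutation of length n is the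
  word of its values in 0..n-1, and u prec v (resp. u succ v) is the sum of those shuffles of u with
  v shifted by length u whose first letter comes from u (resp. from shifted v).\<close>
fun dend_word :: "dop \<Rightarrow> nat list \<Rightarrow> nat list \<Rightarrow> nat list multiset" where
  "dend_word Prec [] v = {#}"
| "dend_word Prec (a # u) v = image_mset (Cons a) (mshuffles u (shift_word (Suc (length u)) v))"
| "dend_word Succ u [] = {#}"
| "dend_word Succ u (b # v) = image_mset (Cons (b + length u)) (mshuffles u (shift_word (length u) v))"

lemma dend_word_Prec_plus_Succ:
  "u \<noteq> [] \<Longrightarrow> v \<noteq> [] \<Longrightarrow>
     dend_word Prec u v + dend_word Succ u v = mshuffles u (shift_word (length u) v)"
  by (cases u; cases v) auto

lemma mem_dend_word:
  assumes "x \<in># dend_word opr u v"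
  shows "x \<noteq> [] \<and> length x = length u + length v \<and> set x = set u \<union> set (shift_word (length u) v)"
  using assms
proof (cases "(opr, u, v)" rule: dend_word.cases)
  case (2 a u' v')
  then show ?thesis
    using assms mem_mshuffles[of _ u' "shift_word (Suc (length u')) v"] by auto
next
  case (4 u' b v')
  then show ?thesis
    using assms mem_mshuffles[of _ u "shift_word (length u) v'"] by auto
qed auto

definition dend_mset :: "dop \<Rightarrow> nat list multiset \<Rightarrow> nat list multiset \<Rightarrow> nat list multiset" where
  "dend_mset opr M N = (\<Sum>u\<in>#M. \<Sum>v\<in>#N. dend_word opr u v)"

lemma dend_mset_add_left [simp]: "dend_mset opr (M + M') N = dend_mset opr M N + dend_mset opr M' N"
  and dend_mset_add_right [simp]: "dend_mset opr M (N + N') = dend_mset opr M N + dend_mset opr M N'"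
  and dend_mset_empty_left [simp]: "dend_mset opr {#} N = {#}"
  and dend_mset_empty_right [simp]: "dend_mset opr M {#} = {#}"
  by (simp_all add: dend_mset_def sum_mset.distrib)

lemma dend_mset_single_left: "dend_mset opr {#u#} N = (\<Sum>v\<in>#N. dend_word opr u v)"
  and dend_mset_single_right: "dend_mset opr M {#v#} = (\<Sum>u\<in>#M. dend_word opr u v)"
  by (simp_all add: dend_mset_def)

lemma dend_mset_split_left: "dend_mset opr M N = (\<Sum>u\<in>#M. dend_mset opr {#u#} N)"
  by (simp add: dend_mset_def)

lemma dend_mset_split_right: "dend_mset opr M N = (\<Sum>v\<in>#N. dend_mset opr M {#v#})"
  by (induction N) (simp_all add: dend_mset_def sum_mset.distrib)

lemma dend_mset_sum_mset_left: "dend_mset opr (\<Sum>x\<in>#X. F x) N = (\<Sum>x\<in>#X. dend_mset opr (F x) N)"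
  and dend_mset_sum_mset_right: "dend_mset opr M (\<Sum>x\<in>#X. F x) = (\<Sum>x\<in>#X. dend_mset opr M (F x))"
  by (induction X) auto

lemma dend_mset_dend_mset_left:
  "dend_mset o1 (dend_mset o2 M1 M2) M3 =
     (\<Sum>u\<in>#M1. \<Sum>v\<in>#M2. \<Sum>w\<in>#M3. dend_mset o1 (dend_word o2 u v) {#w#})"
  by (simp add: dend_mset_def[of o2 M1 M2] dend_mset_sum_mset_left dend_mset_split_right[of o1 _ M3])

lemma dend_mset_dend_mset_right:
  "dend_mset o1 M1 (dend_mset o2 M2 M3) =
     (\<Sum>u\<in>#M1. \<Sum>v\<in>#M2. \<Sum>w\<in>#M3. dend_mset o1 {#u#} (dend_word o2 v w))"
  by (subst dend_mset_split_left) (simp add: dend_mset_def[of o2 M2 M3] dend_mset_sum_mset_right)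

lemma dend_word_rel1:
  assumes "v \<noteq> []" "w \<noteq> []"
  shows "dend_mset Prec (dend_word Succ u v) {#w#} = dend_mset Succ {#u#} (dend_word Prec v w)"
proof -
  obtain b v' where v: "v = b # v'" using assms(1) by (cases v) auto
  let ?k = "length u" and ?m = "length v"
  have "dend_mset Prec (dend_word Succ u v) {#w#} =
      (\<Sum>x\<in>#mshuffles u (shift_word ?k v'). dend_word Prec ((b + ?k) # x) w)"
    using v by (simp add: dend_mset_single_right multiset.map_comp comp_def)
  also have "\<dots> = (\<Sum>x\<in>#mshuffles u (shift_word ?k v').
      image_mset (Cons (b + ?k)) (mshuffles x (shift_word (?k + ?m) w)))"
    by (rule sum_mset_cong) (auto simp: v dest!: mem_mshuffles)
  also have "\<dots> = image_mset (Cons (b + ?k))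
      (mshuffles_left (mshuffles u (shift_word ?k v')) (shift_word (?k + ?m) w))"
    by (simp add: mshuffles_left_def image_mset_sum_mset)
  also have "\<dots> = image_mset (Cons (b + ?k))
      (mshuffles_right u (mshuffles (shift_word ?k v') (shift_word (?k + ?m) w)))"
    by (simp add: mshuffles_assoc)
  also have "\<dots> = dend_mset Succ {#u#} (dend_word Prec v w)"
    using v by (simp add: dend_mset_single_left multiset.map_comp comp_def image_mset_sum_mset[symmetric]
        sum_mset_mshuffles_shift_word image_mset_shift_word_mshuffles)
  finally show ?thesis .
qed

lemma dend_word_rel2:
  assumes "u \<noteq> []" "v \<noteq> []" "w \<noteq> []"
  shows "dend_mset Prec (dend_word Prec u v) {#w#} =
    dend_mset Prec {#u#} (dend_word Prec v w) + dend_mset Prec {#u#} (dend_word Succ v w)"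
proof -
  obtain a u' where u: "u = a # u'" using assms(1) by (cases u) auto
  let ?k = "length u" and ?m = "length v"
  have "dend_mset Prec (dend_word Prec u v) {#w#} =
      (\<Sum>x\<in>#mshuffles u' (shift_word ?k v). dend_word Prec (a # x) w)"
    using u by (simp add: dend_mset_single_right multiset.map_comp comp_def)
  also have "\<dots> = (\<Sum>x\<in>#mshuffles u' (shift_word ?k v).
      image_mset (Cons a) (mshuffles x (shift_word (?k + ?m) w)))"
    by (rule sum_mset_cong) (auto simp: u dest!: mem_mshuffles)
  also have "\<dots> = image_mset (Cons a)
      (mshuffles_left (mshuffles u' (shift_word ?k v)) (shift_word (?k + ?m) w))"
    by (simp add: mshuffles_left_def image_mset_sum_mset)
  also have "\<dots> = image_mset (Cons a)
      (mshuffles_right u' (mshuffles (shift_word ?k v) (shift_word (?k + ?m) w)))"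
    by (simp add: mshuffles_assoc)
  also have "\<dots> = dend_mset Prec {#u#} (mshuffles v (shift_word ?m w))"
    using u by (simp add: dend_mset_single_left image_mset_sum_mset[symmetric]
        sum_mset_mshuffles_shift_word image_mset_shift_word_mshuffles)
  also have "\<dots> = dend_mset Prec {#u#} (dend_word Prec v w) + dend_mset Prec {#u#} (dend_word Succ v w)"
    using assms by (simp flip: dend_word_Prec_plus_Succ)
  finally show ?thesis .
qed

lemma dend_word_rel3:
  assumes "u \<noteq> []" "v \<noteq> []" "w \<noteq> []"
  shows "dend_mset Succ {#u#} (dend_word Succ v w) =
    dend_mset Succ (dend_word Succ u v) {#w#} + dend_mset Succ (dend_word Prec u v) {#w#}"
proof -
  obtain c w' where w: "w = c # w'" using assms(3) by (cases w) auto
  let ?k = "length u" and ?m = "length v"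
  have "dend_mset Succ {#u#} (dend_word Succ v w) =
      image_mset (Cons (c + ?m + ?k))
        (mshuffles_right u (mshuffles (shift_word ?k v) (shift_word (?k + ?m) w')))"
    using w by (simp add: dend_mset_single_left multiset.map_comp comp_def image_mset_sum_mset[symmetric]
        sum_mset_mshuffles_shift_word image_mset_shift_word_mshuffles)
  also have "\<dots> = image_mset (Cons (c + ?m + ?k))
      (mshuffles_left (mshuffles u (shift_word ?k v)) (shift_word (?k + ?m) w'))"
    by (simp add: mshuffles_assoc)
  also have "\<dots> = (\<Sum>x\<in>#mshuffles u (shift_word ?k v).
      image_mset (Cons (c + ?m + ?k)) (mshuffles x (shift_word (?k + ?m) w')))"
    by (simp add: mshuffles_left_def image_mset_sum_mset)
  also have "\<dots> = dend_mset Succ (mshuffles u (shift_word ?k v)) {#w#}"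
    unfolding dend_mset_single_right
    by (rule sum_mset_cong) (auto simp: w ac_simps dest!: mem_mshuffles)
  also have "\<dots> = dend_mset Succ (dend_word Succ u v) {#w#} + dend_mset Succ (dend_word Prec u v) {#w#}"
    using assms by (simp flip: dend_word_Prec_plus_Succ add: add.commute)
  finally show ?thesis .
qed

fun perms :: "btree \<Rightarrow> nat list multiset" where
  "perms BLeaf = {#[0]#}"
| "perms (BNode opr s t) = dend_mset opr (perms s) (perms t)"

lemma perms_nonempty: "x \<in># perms t \<Longrightarrow> x \<noteq> []"
  by (induction t arbitrary: x) (auto simp: dend_mset_def dest: mem_dend_word)

lemma perms_dend_rel1: "perms (prec (succ a b) c) = perms (succ a (prec b c))"
  by (simp add: dend_mset_dend_mset_left dend_mset_dend_mset_right perms_nonempty dend_word_rel1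
      cong: sum_mset_cong)

lemma perms_dend_rel2: "perms (prec (prec a b) c) = perms (prec a (prec b c)) + perms (prec a (succ b c))"
  by (simp add: dend_mset_dend_mset_left dend_mset_dend_mset_right perms_nonempty dend_word_rel2
      sum_mset.distrib cong: sum_mset_cong)

lemma perms_dend_rel3: "perms (succ a (succ b c)) = perms (succ (succ a b) c) + perms (succ (prec a b) c)"
  by (simp add: dend_mset_dend_mset_left dend_mset_dend_mset_right perms_nonempty dend_word_rel3
      sum_mset.distrib cong: sum_mset_cong)


definition lin_form :: "('a \<Rightarrow> 'k) \<Rightarrow> ('a \<Rightarrow>\<^sub>0 'k) \<Rightarrow> 'k::comm_ring" where
  "lin_form f p = (\<Sum>t\<in>Poly_Mapping.keys p. Poly_Mapping.lookup p t * f t)"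

lemma lin_form_superset:
  "finite K \<Longrightarrow> Poly_Mapping.keys p \<subseteq> K \<Longrightarrow>
     lin_form f p = (\<Sum>t\<in>K. Poly_Mapping.lookup p t * f t)"
  unfolding lin_form_def by (rule sum.mono_neutral_left) (auto simp: in_keys_iff)

lemma lin_form_add: "lin_form f (p + q) = lin_form f p + lin_form f q"
proof -
  let ?K = "Poly_Mapping.keys p \<union> Poly_Mapping.keys q"
  have "lin_form f (p + q) = (\<Sum>t\<in>?K. Poly_Mapping.lookup (p + q) t * f t)"
    by (rule lin_form_superset) (auto simp: keys_add)
  also have "\<dots> = lin_form f p + lin_form f q"
    by (simp add: lookup_add distrib_right sum.distrib lin_form_superset[of ?K p] lin_form_superset[of ?K q])
  finally show ?thesis .
qed

lemma lin_form_diff: "lin_form f (p - q) = lin_form f p - lin_form f q"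
  using lin_form_add[of f "p - q" q] by simp

lemma lin_form_zero [simp]: "lin_form f 0 = 0"
  by (simp add: lin_form_def)

lemma lin_form_single [simp]: "lin_form f (Poly_Mapping.single t a) = a * f t"
  by (simp add: lin_form_def)

lemma lin_form_sum: "finite S \<Longrightarrow> lin_form f (\<Sum>i\<in>S. g i) = (\<Sum>i\<in>S. lin_form f (g i))"
  by (induction S rule: finite_induct) (auto simp: lin_form_add)

lemma lookup_smul [simp]: "Poly_Mapping.lookup (smul r p) t = r * Poly_Mapping.lookup p t"
  by (simp add: smul_def Poly_Mapping.map.rep_eq when_def)

lemma lin_form_smul: "lin_form f (smul r p) = r * lin_form f p"
proof -
  have "lin_form f (smul r p) = (\<Sum>t\<in>Poly_Mapping.keys p. Poly_Mapping.lookup (smul r p) t * f t)"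
    by (rule lin_form_superset) (auto simp: in_keys_iff)
  then show ?thesis
    by (simp add: lin_form_def sum_distrib_left mult.assoc)
qed

definition lin_map :: "('a \<Rightarrow> 'b) \<Rightarrow> ('a \<Rightarrow>\<^sub>0 'k) \<Rightarrow> ('b \<Rightarrow>\<^sub>0 'k::comm_ring)" where
  "lin_map g p = (\<Sum>t\<in>Poly_Mapping.keys p. Poly_Mapping.single (g t) (Poly_Mapping.lookup p t))"

lemma lin_map_superset:
  "finite K \<Longrightarrow> Poly_Mapping.keys p \<subseteq> K \<Longrightarrow>
     lin_map g p = (\<Sum>t\<in>K. Poly_Mapping.single (g t) (Poly_Mapping.lookup p t))"
  unfolding lin_map_def by (rule sum.mono_neutral_left) (auto simp: in_keys_iff)

lemma lin_map_add: "lin_map g (p + q) = lin_map g p + lin_map g q"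
proof -
  let ?K = "Poly_Mapping.keys p \<union> Poly_Mapping.keys q"
  have "lin_map g (p + q) = (\<Sum>t\<in>?K. Poly_Mapping.single (g t) (Poly_Mapping.lookup (p + q) t))"
    by (rule lin_map_superset) (auto simp: keys_add)
  also have "\<dots> = lin_map g p + lin_map g q"
    by (simp add: lookup_add single_add sum.distrib lin_map_superset[of ?K p] lin_map_superset[of ?K q])
  finally show ?thesis .
qed

lemma lin_map_zero [simp]: "lin_map g 0 = 0"
  by (simp add: lin_map_def)

lemma lin_map_single [simp]: "lin_map g (Poly_Mapping.single t a) = Poly_Mapping.single (g t) a"
  by (simp add: lin_map_def)

lemma graft_left_eq_lin_map: "graft_left opr p t = lin_map (\<lambda>s. BNode opr s t) p"
  and graft_right_eq_lin_map: "graft_right opr t p = lin_map (BNode opr t) p"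
  and dlin_eq_lin_map: "dlin c = lin_map dtree c"
  by (simp_all add: graft_left_def graft_right_def dlin_def lin_map_def)

definition lincomb :: "('a \<times> int) list \<Rightarrow> ('a \<Rightarrow>\<^sub>0 'k::comm_ring_1)" where
  "lincomb xs = (\<Sum>(t, c)\<leftarrow>xs. Poly_Mapping.single t (of_int c))"

definition int_coeff :: "('a \<times> int) list \<Rightarrow> 'a \<Rightarrow> int" where
  "int_coeff xs s = (\<Sum>(t, c)\<leftarrow>xs. if t = s then c else 0)"

lemma lincomb_Nil [simp]: "lincomb [] = 0"
  and lincomb_Cons [simp]: "lincomb ((t, c) # xs) = Poly_Mapping.single t (of_int c) + lincomb xs"
  and lincomb_append: "lincomb (xs @ ys) = lincomb xs + lincomb ys"
  by (simp_all add: lincomb_def)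

lemma lookup_lincomb: "Poly_Mapping.lookup (lincomb xs) s = of_int (int_coeff xs s)"
  by (induction xs) (auto simp: lincomb_def int_coeff_def lookup_add lookup_single when_def)

lemma int_coeff_notin: "s \<notin> fst ` set xs \<Longrightarrow> int_coeff xs s = 0"
  by (induction xs) (auto simp: int_coeff_def)

lemma keys_lincomb:
  "Poly_Mapping.keys (lincomb xs :: 'a \<Rightarrow>\<^sub>0 'k::{comm_ring_1,ring_char_0}) \<subseteq> fst ` set xs"
  using int_coeff_notin by (fastforce simp: in_keys_iff lookup_lincomb)

lemma lincomb_eq_0I:
  "\<forall>t\<in>fst ` set xs. int_coeff xs t = 0 \<Longrightarrow>
     (lincomb xs :: 'a \<Rightarrow>\<^sub>0 'k::{comm_ring_1,ring_char_0}) = 0"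
  by (rule poly_mapping_eqI) (metis lookup_lincomb int_coeff_notin of_int_0 lookup_zero)

lemma lin_map_lincomb: "lin_map g (lincomb xs) = lincomb (map (\<lambda>(t, c). (g t, c)) xs)"
  by (induction xs) (auto simp: lin_map_add)

lemma smul_zero [simp]: "smul r 0 = 0"
  and smul_zero_left [simp]: "smul 0 p = 0"
  and smul_add: "smul r (p + q) = smul r p + smul r q"
  and smul_single: "smul r (Poly_Mapping.single t a) = Poly_Mapping.single t (r * a)"
  by (rule poly_mapping_eqI; simp add: lookup_add lookup_single when_def algebra_simps)+

lemma smul_lincomb: "smul (of_int n) (lincomb xs) = lincomb (map (\<lambda>(t, m). (t, n * m)) xs)"
  by (induction xs) (auto simp: smul_add smul_single)


section \<open>Coefficients of permutations vanish on the dendriform ideal\<close>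

definition factor_candidates :: "nat list \<Rightarrow> nat list set" where
  "factor_candidates w = {u. set u \<subseteq> {..sum_list w} \<and> length u \<le> length w}"

lemma finite_factor_candidates: "finite (factor_candidates w)"
  unfolding factor_candidates_def by (rule finite_lists_length_le) simp

lemma dend_word_left_factor: "w \<in># dend_word opr u v \<Longrightarrow> u \<in> factor_candidates w"
  using mem_dend_word[of w opr u v] member_le_sum_list[of _ w]
  unfolding factor_candidates_def by auto

lemma dend_word_right_factor: "w \<in># dend_word opr u v \<Longrightarrow> v \<in> factor_candidates w"
proof -
  assume w: "w \<in># dend_word opr u v"
  have "x \<le> sum_list w" if "x \<in> set v" for x
  proof -
    have "x + length u \<in> set w"
      using mem_dend_word[OF w] that by (auto simp: shift_word_def)
    then show ?thesis
      using member_le_sum_list[of "x + length u" w] by simp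
  qed
  then show ?thesis
    using mem_dend_word[OF w] unfolding factor_candidates_def by auto
qed

lemma count_sum_mset: "count (\<Sum>x\<in>#M. f x) w = (\<Sum>x\<in>#M. count (f x) w)"
  by (induction M) auto

lemma sum_mset_eq_sum_count:
  fixes g :: "'a \<Rightarrow> nat"
  assumes "finite U" "\<And>u. u \<in># M \<Longrightarrow> g u \<noteq> 0 \<Longrightarrow> u \<in> U"
  shows "(\<Sum>u\<in>#M. g u) = (\<Sum>u\<in>U. count M u * g u)"
  using assms(2)
proof (induction M)
  case empty
  then show ?case by simp
next
  case (add a M)
  have "(\<Sum>u\<in>U. count (add_mset a M) u * g u) = (\<Sum>u\<in>U. count M u * g u + (if u = a then g u else 0))"
    by (rule sum.cong) auto
  also have "\<dots> = (\<Sum>u\<in>U. count M u * g u) + (if a \<in> U then g a else 0)"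
    using assms(1) by (simp add: sum.distrib)
  finally show ?case
    using add by (auto split: if_splits)
qed

lemma count_dend_mset_left:
  "count (dend_mset opr M N) w = (\<Sum>u\<in>factor_candidates w. count M u * count (dend_mset opr {#u#} N) w)"
proof -
  have "count (dend_mset opr M N) w = (\<Sum>u\<in>#M. count (dend_mset opr {#u#} N) w)"
    by (subst dend_mset_split_left) (simp add: count_sum_mset)
  also have "\<dots> = (\<Sum>u\<in>factor_candidates w. count M u * count (dend_mset opr {#u#} N) w)"
  proof (rule sum_mset_eq_sum_count[OF finite_factor_candidates])
    fix u assume "count (dend_mset opr {#u#} N) w \<noteq> 0"
    then have "w \<in># dend_mset opr {#u#} N"
      by (simp add: count_eq_zero_iff)
    then obtain v where "w \<in># dend_word opr u v"
      by (auto simp: dend_mset_single_left)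
    then show "u \<in> factor_candidates w"
      by (rule dend_word_left_factor)
  qed
  finally show ?thesis .
qed

lemma count_dend_mset_right:
  "count (dend_mset opr M N) w = (\<Sum>v\<in>factor_candidates w. count N v * count (dend_mset opr M {#v#}) w)"
proof -
  have "count (dend_mset opr M N) w = (\<Sum>v\<in>#N. count (dend_mset opr M {#v#}) w)"
    by (subst dend_mset_split_right) (simp add: count_sum_mset)
  also have "\<dots> = (\<Sum>v\<in>factor_candidates w. count N v * count (dend_mset opr M {#v#}) w)"
  proof (rule sum_mset_eq_sum_count[OF finite_factor_candidates])
    fix v assume "count (dend_mset opr M {#v#}) w \<noteq> 0"
    then have "w \<in># dend_mset opr M {#v#}"
      by (simp add: count_eq_zero_iff)
    then obtain u where "w \<in># dend_word opr u v"
      by (auto simp: dend_mset_single_right)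
    then show "v \<in> factor_candidates w"
      by (rule dend_word_right_factor)
  qed
  finally show ?thesis .
qed

lemma sum_mult_of_nat_sum_swap:
  fixes f :: "'a \<Rightarrow> 'k::comm_semiring_1"
  shows "(\<Sum>s\<in>S. f s * of_nat (\<Sum>u\<in>U. g s u * h u)) =
    (\<Sum>u\<in>U. of_nat (h u) * (\<Sum>s\<in>S. f s * of_nat (g s u)))"
proof -
  have "f s * of_nat (\<Sum>u\<in>U. g s u * h u) = (\<Sum>u\<in>U. of_nat (h u) * (f s * of_nat (g s u)))" for s
    by (simp add: of_nat_sum sum_distrib_left mult_ac)
  then have "(\<Sum>s\<in>S. f s * of_nat (\<Sum>u\<in>U. g s u * h u)) =
      (\<Sum>s\<in>S. \<Sum>u\<in>U. of_nat (h u) * (f s * of_nat (g s u)))"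
    by simp
  also have "\<dots> = (\<Sum>u\<in>U. \<Sum>s\<in>S. of_nat (h u) * (f s * of_nat (g s u)))"
    by (rule sum.swap)
  finally show ?thesis
    by (simp add: sum_distrib_left)
qed

definition perm_coeff :: "nat list \<Rightarrow> ('k::field_char_0) bt \<Rightarrow> 'k" where
  "perm_coeff w = lin_form (\<lambda>s. of_nat (count (perms s) w))"

lemma perm_coeff_graft_left:
  "perm_coeff w (graft_left opr p t) =
     (\<Sum>u\<in>factor_candidates w. of_nat (count (dend_mset opr {#u#} (perms t)) w) * perm_coeff u p)"
proof -
  have "perm_coeff w (graft_left opr p t) =
      (\<Sum>s\<in>Poly_Mapping.keys p. Poly_Mapping.lookup p s * of_nat (count (perms (BNode opr s t)) w))"
    by (simp add: perm_coeff_def graft_left_def lin_form_sum del: perms.simps)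
  also have "\<dots> = (\<Sum>s\<in>Poly_Mapping.keys p. Poly_Mapping.lookup p s *
      of_nat (\<Sum>u\<in>factor_candidates w. count (perms s) u * count (dend_mset opr {#u#} (perms t)) w))"
    by (simp only: perms.simps count_dend_mset_left[of opr "perms s" "perms t" w for s])
  also have "\<dots> = (\<Sum>u\<in>factor_candidates w. of_nat (count (dend_mset opr {#u#} (perms t)) w) * perm_coeff u p)"
    unfolding perm_coeff_def lin_form_def by (rule sum_mult_of_nat_sum_swap)
  finally show ?thesis .
qed

lemma perm_coeff_graft_right:
  "perm_coeff w (graft_right opr t p) =
     (\<Sum>v\<in>factor_candidates w. of_nat (count (dend_mset opr (perms t) {#v#}) w) * perm_coeff v p)"
proof -
  have "perm_coeff w (graft_right opr t p) =
      (\<Sum>s\<in>Poly_Mapping.keys p. Poly_Mapping.lookup p s * of_nat (count (perms (BNode opr t s)) w))"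
    by (simp add: perm_coeff_def graft_right_def lin_form_sum del: perms.simps)
  also have "\<dots> = (\<Sum>s\<in>Poly_Mapping.keys p. Poly_Mapping.lookup p s *
      of_nat (\<Sum>v\<in>factor_candidates w. count (perms s) v * count (dend_mset opr (perms t) {#v#}) w))"
    by (simp only: perms.simps count_dend_mset_right[of opr "perms t" "perms s" w for s])
  also have "\<dots> = (\<Sum>v\<in>factor_candidates w. of_nat (count (dend_mset opr (perms t) {#v#}) w) * perm_coeff v p)"
    unfolding perm_coeff_def lin_form_def by (rule sum_mult_of_nat_sum_swap)
  finally show ?thesis .
qed

lemma perm_coeff_dend_ideal: "p \<in> dend_ideal \<Longrightarrow> perm_coeff w p = 0"
proof (induction p arbitrary: w rule: dend_ideal.induct)
  case (rel1 a b c)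
  show ?case
    using perms_dend_rel1[of a b c] by (simp add: dend_rel1_def perm_coeff_def lin_form_diff mon_def)
next
  case (rel2 a b c)
  show ?case
    using arg_cong[OF perms_dend_rel2[of a b c], of "\<lambda>M. count M w"]
    by (simp add: dend_rel2_def perm_coeff_def lin_form_diff mon_def)
next
  case (rel3 a b c)
  show ?case
    using arg_cong[OF perms_dend_rel3[of a b c], of "\<lambda>M. count M w"]
    by (simp add: dend_rel3_def perm_coeff_def lin_form_diff mon_def)
next
  case (left p opr t)
  then show ?case by (simp add: perm_coeff_graft_left)
next
  case (right p opr t)
  then show ?case by (simp add: perm_coeff_graft_right)
qed (simp_all add: perm_coeff_def lin_form_add lin_form_smul)


section \<open>Membership in the dendriform ideal by rewriting\<close>

text \<open>A context is listed from the innermost node outwards; (True, opr, r) makes the hole the left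
  argument of opr, with right argument r.\<close>
type_synonym tree_context = "(bool \<times> dop \<times> btree) list"

fun plug :: "tree_context \<Rightarrow> btree \<Rightarrow> btree" where
  "plug [] t = t"
| "plug ((left, opr, r) # cs) t = plug cs (if left then BNode opr t r else BNode opr r t)"

fun graft_context :: "tree_context \<Rightarrow> ('k::field_char_0) bt \<Rightarrow> 'k bt" where
  "graft_context [] p = p"
| "graft_context ((left, opr, r) # cs) p =
     graft_context cs (if left then graft_left opr p r else graft_right opr r p)"

lemma graft_context_dend_ideal: "p \<in> dend_ideal \<Longrightarrow> graft_context cs p \<in> dend_ideal"
  by (induction cs p rule: graft_context.induct) (simp_all add: dend_ideal.left dend_ideal.right)

lemma graft_context_lincomb:
  "graft_context cs (lincomb xs) = lincomb (map (\<lambda>(t, c). (plug cs t, c)) xs)"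
  by (induction cs arbitrary: xs)
    (auto simp: graft_left_eq_lin_map graft_right_eq_lin_map lin_map_lincomb comp_def split_def)

fun dend_rel_terms :: "nat \<Rightarrow> btree \<Rightarrow> btree \<Rightarrow> btree \<Rightarrow> (btree \<times> int) list" where
  "dend_rel_terms (Suc 0) a b c = [(prec (succ a b) c, 1), (succ a (prec b c), -1)]"
| "dend_rel_terms (Suc (Suc 0)) a b c =
     [(prec (prec a b) c, 1), (prec a (prec b c), -1), (prec a (succ b c), -1)]"
| "dend_rel_terms _ a b c = [(succ a (succ b c), 1), (succ (succ a b) c, -1), (succ (prec a b) c, -1)]"

lemma lincomb_dend_rel_terms: "(lincomb (dend_rel_terms k a b c) :: ('k::field_char_0) bt) \<in> dend_ideal"
proof -
  have "lincomb (dend_rel_terms k a b c) \<in> {dend_rel1 a b c, dend_rel2 a b c, dend_rel3 a b c :: 'k bt}"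
    by (cases "(k, a, b, c)" rule: dend_rel_terms.cases)
      (simp_all add: dend_rel1_def dend_rel2_def dend_rel3_def mon_def single_uminus)
  then show ?thesis
    by (auto intro: dend_ideal.rel1 dend_ideal.rel2 dend_ideal.rel3)
qed

type_synonym rewrite_step = "tree_context \<times> nat \<times> btree \<times> btree \<times> btree \<times> int"

fun step_terms :: "rewrite_step \<Rightarrow> (btree \<times> int) list" where
  "step_terms (cs, k, a, b, c, n) = map (\<lambda>(t, m). (plug cs t, n * m)) (dend_rel_terms k a b c)"

lemma lincomb_step_terms: "(lincomb (step_terms st) :: ('k::field_char_0) bt) \<in> dend_ideal"
proof -
  obtain cs k a b c n where st: "st = (cs, k, a, b, c, n)"
    by (cases st) auto
  have "(lincomb (step_terms st) :: 'k bt) = smul (of_int n) (graft_context cs (lincomb (dend_rel_terms k a b c)))"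
    by (simp add: st graft_context_lincomb smul_lincomb comp_def split_def)
  then show ?thesis
    by (simp add: dend_ideal.scale graft_context_dend_ideal lincomb_dend_rel_terms)
qed

fun root_redex :: "btree \<Rightarrow> (nat \<times> btree \<times> btree \<times> btree) option" where
  "root_redex (BNode Prec (BNode Succ a b) c) = Some (1, a, b, c)"
| "root_redex (BNode Prec (BNode Prec a b) c) = Some (2, a, b, c)"
| "root_redex (BNode Succ a (BNode Succ b c)) = Some (3, a, b, c)"
| "root_redex _ = None"

fun find_redex :: "btree \<Rightarrow> (tree_context \<times> nat \<times> btree \<times> btree \<times> btree) option" where
  "find_redex BLeaf = None"
| "find_redex (BNode opr s t) =
     (case root_redex (BNode opr s t) of
       Some r \<Rightarrow> Some ([], r)
     | None \<Rightarrow>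
         (case find_redex s of
           Some (cs, r) \<Rightarrow> Some (cs @ [(True, opr, t)], r)
         | None \<Rightarrow> map_option (\<lambda>(cs, r). (cs @ [(False, opr, s)], r)) (find_redex t)))"

text \<open>Rewriting with the dendriform relations oriented towards the first term of
  dend_rel_terms.  Only soundness is needed: each step adds an element of the ideal, so if all
  coefficients of the result vanish, the input lies in the ideal; neither termination nor
  confluence has to be proved, and the fuel bounds the number of steps.\<close>
definition next_rewrite :: "(btree \<times> int) list \<Rightarrow> rewrite_step option" where
  "next_rewrite xs =
     (case find (\<lambda>t. int_coeff xs t \<noteq> 0 \<and> find_redex t \<noteq> None) (map fst xs) of
       None \<Rightarrow> None
     | Some t \<Rightarrow> map_option (\<lambda>(cs, k, a, b, c). (cs, k, a, b, c, - int_coeff xs t)) (find_redex t))"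

fun reduce :: "nat \<Rightarrow> (btree \<times> int) list \<Rightarrow> (btree \<times> int) list" where
  "reduce 0 xs = xs"
| "reduce (Suc n) xs = (case next_rewrite xs of None \<Rightarrow> xs | Some st \<Rightarrow> reduce n (xs @ step_terms st))"

lemma lincomb_reduce_diff: "(lincomb (reduce n xs) - lincomb xs :: ('k::field_char_0) bt) \<in> dend_ideal"
proof (induction n arbitrary: xs)
  case 0
  show ?case by (simp add: dend_ideal.zero)
next
  case (Suc n)
  show ?case
  proof (cases "next_rewrite xs")
    case None
    then show ?thesis by (simp add: dend_ideal.zero)
  next
    case (Some st)
    have "(lincomb (reduce n (xs @ step_terms st)) - lincomb (xs @ step_terms st)) + lincomb (step_terms st)
        \<in> (dend_ideal :: 'k bt set)"
      by (intro dend_ideal.add Suc.IH lincomb_step_terms)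
    then show ?thesis
      by (simp add: Some lincomb_append)
  qed
qed

definition reduces_to_zero :: "nat \<Rightarrow> (btree \<times> int) list \<Rightarrow> bool" where
  "reduces_to_zero n xs \<longleftrightarrow> (\<forall>t\<in>fst ` set (reduce n xs). int_coeff (reduce n xs) t = 0)"

lemma reduces_to_zero_dend_ideal:
  assumes "reduces_to_zero n xs"
  shows "(lincomb xs :: ('k::field_char_0) bt) \<in> dend_ideal"
proof -
  have "lincomb (reduce n xs) = (0 :: 'k bt)"
    using assms by (intro lincomb_eq_0I) (simp add: reduces_to_zero_def)
  then have "smul (-1) (lincomb (reduce n xs) - lincomb xs) = (lincomb xs :: 'k bt)"
    by (intro poly_mapping_eqI) (simp add: lookup_minus)
  then show ?thesis
    by (metis dend_ideal.scale lincomb_reduce_diff)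
qed


lemma lookup_sum_smul:
  "Poly_Mapping.lookup (\<Sum>i<n. smul (a i) (v i)) t = (\<Sum>i<n. a i * Poly_Mapping.lookup (v i) t)"
  by (simp add: lookup_sum)

lemma lookup_sum_smul_eq_0:
  assumes "\<And>i. i < n \<Longrightarrow> Poly_Mapping.lookup (v i) t = 0"
  shows "Poly_Mapping.lookup (\<Sum>i<n. smul (a i) (v i)) t = 0"
  using assms by (simp add: lookup_sum_smul)

lemma echelon_independent:
  fixes v :: "nat \<Rightarrow> 'b \<Rightarrow>\<^sub>0 'k::field_char_0"
  assumes "\<And>i. i < n \<Longrightarrow> Poly_Mapping.lookup (v i) (p i) \<noteq> 0"
    and "\<And>i k. i < k \<Longrightarrow> k < n \<Longrightarrow> Poly_Mapping.lookup (v i) (p k) = 0"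
    and "(\<Sum>i<n. smul (a i) (v i)) = 0"
  shows "\<forall>i<n. a i = 0"
  using assms
proof (induction n)
  case 0
  then show ?case by simp
next
  case (Suc n)
  have "a n * Poly_Mapping.lookup (v n) (p n) = Poly_Mapping.lookup (\<Sum>i<Suc n. smul (a i) (v i)) (p n)"
    using lookup_sum_smul_eq_0[of n v "p n" a] Suc.prems(2) by (simp add: lookup_add)
  then have "a n = 0"
    using Suc.prems by simp
  then have "\<forall>i<n. a i = 0"
    using Suc by (intro Suc.IH) simp_all
  with \<open>a n = 0\<close> show ?case
    by (simp add: less_Suc_eq)
qed

lemma echelon_reduce:
  fixes v :: "nat \<Rightarrow> 'b \<Rightarrow>\<^sub>0 'k::field_char_0"
  assumes "\<And>i. i < n \<Longrightarrow> Poly_Mapping.lookup (v i) (p i) \<noteq> 0"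
    and "\<And>i k. i < k \<Longrightarrow> k < n \<Longrightarrow> Poly_Mapping.lookup (v i) (p k) = 0"
  shows "\<exists>a. \<forall>k<n. Poly_Mapping.lookup (x - (\<Sum>i<n. smul (a i) (v i))) (p k) = 0"
  using assms
proof (induction n arbitrary: x)
  case 0
  then show ?case by simp
next
  case (Suc n)
  define b where "b = Poly_Mapping.lookup x (p n) / Poly_Mapping.lookup (v n) (p n)"
  have "\<exists>a. \<forall>k<n. Poly_Mapping.lookup (x - smul b (v n) - (\<Sum>i<n. smul (a i) (v i))) (p k) = 0"
    by (rule Suc.IH) (use Suc.prems in auto)
  then obtain a where a: "\<forall>k<n. Poly_Mapping.lookup (x - smul b (v n) - (\<Sum>i<n. smul (a i) (v i))) (p k) = 0"
    by blast
  have pn: "Poly_Mapping.lookup (x - smul b (v n) - (\<Sum>i<n. smul (a i) (v i))) (p n) = 0"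
    using Suc.prems lookup_sum_smul_eq_0[of n v "p n" a] by (simp add: lookup_minus b_def)
  have eq: "x - (\<Sum>i<Suc n. smul ((a(n := b)) i) (v i)) = x - smul b (v n) - (\<Sum>i<n. smul (a i) (v i))"
    by (simp add: algebra_simps)
  show ?case
  proof (intro exI[of _ "a(n := b)"] allI impI)
    fix k assume "k < Suc n"
    then consider "k < n" | "k = n" by linarith
    then show "Poly_Mapping.lookup (x - (\<Sum>i<Suc n. smul ((a(n := b)) i) (v i))) (p k) = 0"
      unfolding eq by cases (use a pn in auto)
  qed
qed

text \<open>An entry (r, q, e) is an unknown q with its column e (e r' is the coefficient of q in
  row r') together with a row r.\<close>
fun upper_triangular :: "('r \<times> 'b \<times> ('r \<Rightarrow> nat)) list \<Rightarrow> bool" where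
  "upper_triangular [] \<longleftrightarrow> True"
| "upper_triangular ((r, q, e) # cols) \<longleftrightarrow>
     e r \<noteq> 0 \<and> (\<forall>(r', q', e')\<in>set cols. e' r = 0) \<and> upper_triangular cols"

lemma upper_triangular_solution_zero:
  fixes x :: "'b \<Rightarrow> 'k::field_char_0"
  assumes "upper_triangular cols"
    and "\<forall>(r, q, e)\<in>set cols. (\<Sum>(r', q', e')\<leftarrow>cols. of_nat (e' r) * x q') = 0"
  shows "\<forall>(r, q, e)\<in>set cols. x q = 0"
  using assms
proof (induction cols rule: upper_triangular.induct)
  case 1
  then show ?case by simp
next
  case (2 r q e cols)
  have "\<forall>(r', q', e')\<in>set cols. e' r = 0"
    using "2.prems"(1) by simp
  then have "(\<Sum>(r', q', e')\<leftarrow>cols. of_nat (e' r) * x q') = (0::'k)"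
    by (induction cols) auto
  then have "of_nat (e r) * x q = 0"
    using "2.prems"(2) by simp
  then have "x q = 0"
    using "2.prems"(1) by simp
  moreover have "\<forall>(r', q', e')\<in>set cols. (\<Sum>(r'', q'', e'')\<leftarrow>cols. of_nat (e'' r') * x q'') = 0"
    using "2.prems"(2) \<open>x q = 0\<close> by auto
  ultimately show ?case
    using 2 by simp
qed


definition tree_A :: "gen \<Rightarrow> gen \<Rightarrow> ttree" where
  "tree_A i j = TNode j (TNode i TLeaf TLeaf TLeaf) TLeaf TLeaf"

definition tree_B :: "gen \<Rightarrow> gen \<Rightarrow> ttree" where
  "tree_B i j = TNode j TLeaf (TNode i TLeaf TLeaf TLeaf) TLeaf"

definition tree_C :: "gen \<Rightarrow> gen \<Rightarrow> ttree" where
  "tree_C i j = TNode j TLeaf TLeaf (TNode i TLeaf TLeaf TLeaf)"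

definition all_gens :: "gen list" where
  "all_gens = [W1, W2, W3, W4, W5]"

definition ft5_monomials :: "ttree list" where
  "ft5_monomials =
     [tree_A i j. i \<leftarrow> all_gens, j \<leftarrow> all_gens] @ [tree_B i j. i \<leftarrow> all_gens, j \<leftarrow> all_gens] @
     [tree_C i j. i \<leftarrow> all_gens, j \<leftarrow> all_gens]"

definition rels33_coeffs :: "(ttree \<times> int) list list" where
  "rels33_coeffs = [
    [(tree_A W4 W2, 1), (tree_C W2 W4, -1)],
    [(tree_A W5 W2, 1), (tree_C W2 W5, -1)],
    [(tree_A W4 W3, 1), (tree_C W3 W4, -1)],
    [(tree_A W5 W3, 1), (tree_C W3 W5, -1)],
    [(tree_A W1 W1, 1), (tree_A W2 W1, 1), (tree_B W5 W1, -1)],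
    [(tree_B W1 W3, 1), (tree_B W2 W3, 1), (tree_C W5 W3, -1)],
    [(tree_A W1 W4, 1), (tree_A W2 W4, 1), (tree_B W5 W4, -1)],
    [(tree_A W1 W1, 1), (tree_A W4 W1, 1), (tree_C W1 W4, -1)],
    [(tree_B W4 W2, 1), (tree_B W5 W2, 1), (tree_C W1 W3, -1)],
    [(tree_A W4 W5, 1), (tree_A W5 W5, 1), (tree_B W1 W4, -1)],
    [(tree_A W4 W5, 1), (tree_B W2 W4, 1), (tree_C W5 W4, -1)],
    [(tree_B W3 W1, 1), (tree_C W1 W1, -1), (tree_C W4 W1, -1)],
    [(tree_B W3 W2, 1), (tree_C W1 W2, -1), (tree_C W4 W2, -1)],
    [(tree_A W3 W5, 1), (tree_B W1 W5, -1), (tree_B W4 W5, -1)],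
    [(tree_A W1 W2, 1), (tree_C W1 W1, -1), (tree_C W2 W1, -1)],
    [(tree_A W3 W2, 1), (tree_B W4 W2, -1), (tree_C W2 W3, -1)],
    [(tree_B W1 W2, 1), (tree_C W2 W3, -1), (tree_C W3 W3, -1)],
    [(tree_A W1 W5, 1), (tree_B W2 W4, -1), (tree_B W3 W4, -1)],
    [(tree_B W2 W1, 1), (tree_C W2 W1, -1), (tree_C W3 W1, -1), (tree_C W5 W1, -1)],
    [(tree_A W2 W2, 1), (tree_B W5 W2, -1), (tree_C W1 W2, -1), (tree_C W2 W2, -1)],
    [(tree_B W2 W2, 1), (tree_C W2 W2, -1), (tree_C W3 W2, -1), (tree_C W5 W2, -1)],
    [(tree_A W3 W3, 1), (tree_B W1 W3, -1), (tree_B W4 W3, -1), (tree_C W3 W3, -1)],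
    [(tree_B W3 W3, 1), (tree_B W4 W3, 1), (tree_B W5 W3, 1), (tree_C W4 W3, -1)],
    [(tree_A W3 W4, 1), (tree_A W4 W4, 1), (tree_A W5 W4, 1), (tree_B W4 W4, -1)],
    [(tree_A W1 W4, 1), (tree_A W4 W4, 1), (tree_B W3 W4, 1), (tree_C W4 W4, -1)],
    [(tree_A W2 W5, 1), (tree_B W2 W5, -1), (tree_B W3 W5, -1), (tree_B W5 W5, -1)],
    [(tree_A W5 W5, 1), (tree_B W1 W5, 1), (tree_B W2 W5, 1), (tree_C W5 W5, -1)],
    [(tree_A W2 W1, 1), (tree_A W3 W1, 1), (tree_A W5 W1, 1), (tree_C W1 W5, -1)],
    [(tree_B W4 W1, 1), (tree_B W5 W1, 1), (tree_C W1 W4, -1), (tree_C W1 W5, -1)],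
    [(tree_A W1 W3, 1), (tree_B W2 W1, -1), (tree_C W2 W1, 1), (tree_C W4 W1, -1)],
    [(tree_B W1 W1, 1), (tree_C W2 W4, -1), (tree_C W2 W5, -1), (tree_C W3 W4, -1), (tree_C W3 W5, -1)],
    [(tree_A W2 W3, 1), (tree_B W2 W2, -1), (tree_B W2 W3, -1), (tree_B W4 W3, 1), (tree_C W2 W2, 1), (tree_C W4 W2, -1), (tree_C W4 W3, -1)],
    [(tree_A W2 W4, 1), (tree_A W2 W5, 1), (tree_A W4 W4, -1), (tree_B W2 W5, -1), (tree_B W4 W4, 1), (tree_B W4 W5, 1), (tree_C W4 W5, -1)]]"

text \<open>The pivots and the elimination rows were found by Gaussian elimination; only the properties
  checked below are used.\<close>
definition rel_pivots :: "ttree list" where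
  "rel_pivots = [
    tree_A W4 W2, tree_A W5 W2, tree_A W4 W3, tree_A W5 W3, tree_A W1 W1, tree_C W5 W3,
    tree_B W5 W4, tree_A W4 W1, tree_C W1 W3, tree_B W1 W4, tree_C W5 W4, tree_B W3 W1,
    tree_B W3 W2, tree_A W3 W5, tree_A W1 W2, tree_A W3 W2, tree_B W1 W2, tree_A W1 W5,
    tree_C W3 W1, tree_A W2 W2, tree_C W3 W2, tree_A W3 W3, tree_B W3 W3, tree_A W3 W4,
    tree_C W4 W4, tree_B W3 W5, tree_C W5 W5, tree_A W3 W1, tree_B W4 W1, tree_A W1 W3,
    tree_B W1 W1, tree_A W2 W3, tree_C W4 W5]"

definition elim_rows :: "(nat list \<times> ttree) list" where
  "elim_rows = [
    ([0,1,2,4,3], tree_B W2 W2),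
    ([0,1,2,3,4], tree_C W2 W2),
    ([0,1,3,2,4], tree_C W1 W2),
    ([0,1,4,2,3], tree_C W5 W2),
    ([0,1,4,3,2], tree_C W4 W2),
    ([0,2,1,3,4], tree_C W2 W3),
    ([0,2,1,4,3], tree_C W3 W3),
    ([0,3,1,2,4], tree_B W5 W2),
    ([0,3,2,1,4], tree_B W4 W2),
    ([0,4,1,2,3], tree_B W2 W3),
    ([0,4,1,3,2], tree_C W4 W3),
    ([0,4,2,1,3], tree_B W1 W3),
    ([0,4,3,1,2], tree_B W5 W3),
    ([0,4,3,2,1], tree_B W4 W3),
    ([1,0,2,4,3], tree_B W2 W1),
    ([1,0,2,3,4], tree_C W2 W1),
    ([1,0,3,2,4], tree_C W1 W1),
    ([1,0,4,2,3], tree_C W5 W1),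
    ([1,0,4,3,2], tree_C W4 W1),
    ([2,0,1,3,4], tree_C W2 W5),
    ([2,0,1,4,3], tree_C W3 W5),
    ([2,1,0,3,4], tree_C W2 W4),
    ([2,1,0,4,3], tree_C W3 W4),
    ([3,0,2,1,4], tree_C W1 W5),
    ([3,2,0,1,4], tree_A W5 W1),
    ([3,2,1,0,4], tree_C W1 W4),
    ([3,1,0,2,4], tree_B W5 W1),
    ([3,0,1,2,4], tree_A W2 W1),
    ([4,0,1,3,2], tree_A W2 W5),
    ([4,0,1,2,3], tree_B W2 W5),
    ([4,0,2,1,3], tree_B W1 W5),
    ([4,0,3,1,2], tree_B W5 W5),
    ([4,0,3,2,1], tree_B W4 W5),
    ([4,1,0,2,3], tree_B W2 W4),
    ([4,1,0,3,2], tree_B W3 W4),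
    ([4,2,0,1,3], tree_A W5 W5),
    ([4,2,1,0,3], tree_A W4 W5),
    ([4,3,0,1,2], tree_A W2 W4),
    ([4,3,0,2,1], tree_B W4 W4),
    ([4,3,1,0,2], tree_A W1 W4),
    ([4,3,2,0,1], tree_A W5 W4),
    ([4,3,2,1,0], tree_A W4 W4)]"

lemma tarity_ge_1: "1 \<le> tarity t"
  by (induction t) auto

lemma odd_tarity: "odd (tarity t)"
  by (induction t) auto

lemma tarity_eq_1_iff: "tarity t = 1 \<longleftrightarrow> t = TLeaf"
proof (cases t)
  case (TNode g a b c)
  then show ?thesis
    using tarity_ge_1[of a] tarity_ge_1[of b] tarity_ge_1[of c] by simp
qed simp

lemma tarity_eq_3_iff: "tarity t = 3 \<longleftrightarrow> (\<exists>g. t = TNode g TLeaf TLeaf TLeaf)"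
proof
  assume "tarity t = 3"
  then obtain g a b c where "t = TNode g a b c" "tarity a + tarity b + tarity c = 3"
    by (cases t) auto
  with tarity_ge_1[of a] tarity_ge_1[of b] tarity_ge_1[of c] show "\<exists>g. t = TNode g TLeaf TLeaf TLeaf"
    by (auto simp: tarity_eq_1_iff[symmetric])
qed auto

lemma tree_ABC_mem_ft5_monomials:
  "tree_A i j \<in> set ft5_monomials" "tree_B i j \<in> set ft5_monomials" "tree_C i j \<in> set ft5_monomials"
  by (cases i; cases j; simp add: ft5_monomials_def all_gens_def)+

lemma mem_ft5_monomials: "t \<in> set ft5_monomials \<longleftrightarrow> tarity t = 5"
proof
  assume "tarity t = 5"
  then obtain g a b c where t: "t = TNode g a b c" and sum: "tarity a + tarity b + tarity c = 5"
    by (cases t) auto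
  have "(tarity a = 3 \<and> tarity b = 1 \<and> tarity c = 1) \<or> (tarity a = 1 \<and> tarity b = 3 \<and> tarity c = 1)
      \<or> (tarity a = 1 \<and> tarity b = 1 \<and> tarity c = 3)"
    using sum odd_tarity[of a] odd_tarity[of b] odd_tarity[of c] by (elim oddE) presburger
  then have "\<exists>h. t = tree_A h g \<or> t = tree_B h g \<or> t = tree_C h g"
    by (auto simp: t tarity_eq_1_iff[unfolded One_nat_def] tarity_eq_3_iff tree_A_def tree_B_def tree_C_def)
  then show "t \<in> set ft5_monomials"
    using tree_ABC_mem_ft5_monomials by blast
qed (auto simp: ft5_monomials_def all_gens_def tree_A_def tree_B_def tree_C_def)

lemma FT5_iff_lookup:
  "c \<in> FT5 \<longleftrightarrow> (\<forall>t. t \<notin> set ft5_monomials \<longrightarrow> Poly_Mapping.lookup c t = 0)"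
  by (auto simp: FT5_def mem_ft5_monomials in_keys_iff)

lemma FT5_diff_sum_smul:
  "c \<in> FT5 \<Longrightarrow> (\<And>i. i < n \<Longrightarrow> v i \<in> FT5) \<Longrightarrow> c - (\<Sum>i<n. smul (a i) (v i)) \<in> FT5"
  by (simp add: FT5_iff_lookup lookup_minus lookup_sum_smul)

lemma rels33_eq_map_lincomb: "(rels33 :: ('k::field_char_0) ft list) = map lincomb rels33_coeffs"
  by (simp add: rels33_def rels33_coeffs_def A_def B_def C_def tree_A_def tree_B_def tree_C_def mon_def
      single_uminus algebra_simps)

lemma length_rels33: "length rels33 = 33"
  by (simp add: rels33_def)

lemma length_rels33_coeffs: "length rels33_coeffs = 33"
  by (simp add: rels33_coeffs_def)

lemma rels33_nth: "i < 33 \<Longrightarrow> rels33 ! i = lincomb (rels33_coeffs ! i)"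
  by (simp add: rels33_eq_map_lincomb length_rels33_coeffs)

lemma rels33_coeffs_reduce_to_zero:
  "list_all (\<lambda>xs. reduces_to_zero 10 (map (\<lambda>(t, c). (dtree t, c)) xs)) rels33_coeffs"
  by code_simp

lemma rels33_coeffs_support: "list_all (\<lambda>xs. fst ` set xs \<subseteq> set ft5_monomials) rels33_coeffs"
  by code_simp

lemma rels33_in_ker_d5: "i < 33 \<Longrightarrow> (rels33 ! i :: ('k::field_char_0) ft) \<in> ker_d5"
proof -
  assume i: "i < 33"
  have "Poly_Mapping.keys (rels33 ! i :: 'k ft) \<subseteq> set ft5_monomials"
    using i keys_lincomb[of "rels33_coeffs ! i"] rels33_coeffs_support
    by (auto simp: rels33_nth list_all_length length_rels33_coeffs)
  then have "rels33 ! i \<in> (FT5 :: 'k ft set)"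
    by (auto simp: FT5_def mem_ft5_monomials)
  moreover have "reduces_to_zero 10 (map (\<lambda>(t, c). (dtree t, c)) (rels33_coeffs ! i))"
    using i rels33_coeffs_reduce_to_zero by (simp add: list_all_length length_rels33_coeffs)
  then have "dlin (rels33 ! i :: 'k ft) \<in> dend_ideal"
    using i by (simp add: rels33_nth dlin_eq_lin_map lin_map_lincomb reduces_to_zero_dend_ideal)
  ultimately show ?thesis
    by (simp add: ker_d5_def)
qed

lemma rels33_coeffs_echelon:
  "list_all (\<lambda>i. int_coeff (rels33_coeffs ! i) (rel_pivots ! i) \<noteq> 0 \<and>
     list_all (\<lambda>k. int_coeff (rels33_coeffs ! i) (rel_pivots ! k) = 0) [Suc i..<33]) [0..<33]"
  by code_simp

lemma rels33_echelon:
  fixes i k :: nat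
  shows "i < 33 \<Longrightarrow> Poly_Mapping.lookup (rels33 ! i :: ('k::field_char_0) ft) (rel_pivots ! i) \<noteq> 0"
    and "i < k \<Longrightarrow> k < 33 \<Longrightarrow> Poly_Mapping.lookup (rels33 ! i :: 'k ft) (rel_pivots ! k) = 0"
  using rels33_coeffs_echelon by (auto simp: list_all_iff rels33_nth lookup_lincomb)


section \<open>The kernel is spanned by the relations\<close>

lemma perm_coeff_dlin: "perm_coeff w (dlin c) = lin_form (\<lambda>t. of_nat (count (perms (dtree t)) w)) c"
  by (simp add: perm_coeff_def dlin_def lin_form_sum) (simp add: lin_form_def)

lemma ker_d5_perm_coeff: "c \<in> ker_d5 \<Longrightarrow> lin_form (\<lambda>t. of_nat (count (perms (dtree t)) w)) c = 0"
  by (simp add: ker_d5_def perm_coeff_dend_ideal flip: perm_coeff_dlin)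

definition elim_system :: "(nat list \<times> ttree \<times> (nat list \<Rightarrow> nat)) list" where
  "elim_system = map (\<lambda>(w, q). (w, q, \<lambda>w'. count (perms (dtree q)) w')) elim_rows"

lemma elim_system_upper_triangular: "upper_triangular elim_system"
  by code_simp

lemma elim_rows_distinct: "distinct (map snd elim_rows)"
  by code_simp

lemma ft5_monomials_covered: "set ft5_monomials = set rel_pivots \<union> snd ` set elim_rows"
  by code_simp

lemma length_rel_pivots: "length rel_pivots = 33"
  by (simp add: rel_pivots_def)

lemma FT5_eq_0I:
  assumes "c \<in> FT5"
    and "\<And>w. lin_form (\<lambda>t. of_nat (count (perms (dtree t)) w)) c = 0"
    and "\<And>k. k < 33 \<Longrightarrow> Poly_Mapping.lookup c (rel_pivots ! k) = 0"
  shows "c = 0"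
proof -
  have keys: "Poly_Mapping.keys c \<subseteq> set ft5_monomials"
    using assms(1) by (auto simp: FT5_def mem_ft5_monomials)
  have pivots: "Poly_Mapping.lookup c t = 0" if "t \<in> set rel_pivots" for t
    using that assms(3) by (auto simp: in_set_conv_nth length_rel_pivots)
  have "(\<Sum>(r, q, e)\<leftarrow>elim_system. of_nat (e w) * Poly_Mapping.lookup c q) =
      lin_form (\<lambda>t. of_nat (count (perms (dtree t)) w)) c" for w
  proof -
    have "(\<Sum>(r, q, e)\<leftarrow>elim_system. of_nat (e w) * Poly_Mapping.lookup c q) =
        (\<Sum>q\<leftarrow>map snd elim_rows. of_nat (count (perms (dtree q)) w) * Poly_Mapping.lookup c q)"
      by (simp add: elim_system_def comp_def split_def)
    also have "\<dots> = (\<Sum>q\<in>set (map snd elim_rows). of_nat (count (perms (dtree q)) w) * Poly_Mapping.lookup c q)"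
      by (rule sum_list_distinct_conv_sum_set[OF elim_rows_distinct])
    also have "\<dots> = (\<Sum>t\<in>set ft5_monomials. of_nat (count (perms (dtree t)) w) * Poly_Mapping.lookup c t)"
      by (rule sum.mono_neutral_left) (auto simp: ft5_monomials_covered pivots)
    also have "\<dots> = lin_form (\<lambda>t. of_nat (count (perms (dtree t)) w)) c"
      by (simp add: lin_form_superset[OF _ keys] mult.commute)
    finally show ?thesis .
  qed
  then have "\<forall>(r, q, e)\<in>set elim_system. Poly_Mapping.lookup c q = 0"
    using assms(2) by (intro upper_triangular_solution_zero[OF elim_system_upper_triangular]) auto
  then have "Poly_Mapping.lookup c t = 0" if "t \<in> set ft5_monomials" for t
    using that pivots by (auto simp: ft5_monomials_covered elim_system_def)
  then show ?thesis
    using keys by (intro poly_mapping_eqI) (auto simp: in_keys_iff)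
qed

lemma ker_d5_in_span:
  assumes "(c :: ('k::field_char_0) ft) \<in> ker_d5"
  shows "\<exists>a. c = (\<Sum>i<33. smul (a i) (rels33 ! i))"
proof -
  obtain a where a: "\<forall>k<33. Poly_Mapping.lookup (c - (\<Sum>i<33. smul (a i) (rels33 ! i))) (rel_pivots ! k) = 0"
    using echelon_reduce[of 33 "\<lambda>i. rels33 ! i" "\<lambda>k. rel_pivots ! k" c] rels33_echelon by blast
  define r where "r = c - (\<Sum>i<33. smul (a i) (rels33 ! i))"
  have "r \<in> FT5"
    unfolding r_def using assms rels33_in_ker_d5 by (intro FT5_diff_sum_smul) (auto simp: ker_d5_def)
  moreover have "lin_form (\<lambda>t. of_nat (count (perms (dtree t)) w)) r = 0" for w
  proof -
    have "(\<Sum>i<33. a i * lin_form (\<lambda>t. of_nat (count (perms (dtree t)) w)) (rels33 ! i)) = 0"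
      by (intro sum.neutral ballI) (simp add: ker_d5_perm_coeff rels33_in_ker_d5)
    then show ?thesis
      using assms by (simp add: r_def lin_form_diff lin_form_sum lin_form_smul ker_d5_perm_coeff)
  qed
  ultimately have "r = 0"
    using a by (intro FT5_eq_0I) (auto simp: r_def)
  then show ?thesis
    by (auto simp: r_def)
qed

theorem theorem5p1:
  shows "length (rels33 :: ('k::field_char_0) ft list) = 33
    \<and> (\<forall>i < length (rels33 :: 'k ft list). rels33 ! i \<in> ker_d5)
    \<and> (\<forall>a :: nat \<Rightarrow> 'k.
          (\<Sum>i < length (rels33 :: 'k ft list). smul (a i) (rels33 ! i)) = 0
          \<longrightarrow> (\<forall>i < length (rels33 :: 'k ft list). a i = 0))
    \<and> (\<forall>c \<in> (ker_d5 :: 'k ft set). \<exists>a :: nat \<Rightarrow> 'k.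
          c = (\<Sum>i < length (rels33 :: 'k ft list). smul (a i) (rels33 ! i)))"
  unfolding length_rels33
proof (intro conjI allI impI ballI)
  show "(33::nat) = 33" ..
next
  show "rels33 ! i \<in> ker_d5" if "i < 33" for i
    using that by (rule rels33_in_ker_d5)
next
  show "a i = 0" if "(\<Sum>i<33. smul (a i) (rels33 ! i)) = 0" and "i < 33" for a :: "nat \<Rightarrow> 'k" and i
    using echelon_independent[of 33 "\<lambda>i. rels33 ! i" "\<lambda>k. rel_pivots ! k" a] rels33_echelon that by blast
next
  show "\<exists>a. c = (\<Sum>i<33. smul (a i) (rels33 ! i))" if "c \<in> ker_d5" for c :: "'k ft"
    using that by (rule ker_d5_in_span)
qed

end
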